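(* Let $S$ be a $0$-left cancellative semigroup admitting least common multiples. Then for every open maximal string $\sigma$ in $S$, the map $\varphi_\sigma$ is an ultracharacter of $\mathfrak E(S)$.
   Context: $S$ has zero $0$, $S'=S\setminus\{0\}$; $0$-left cancellative: $st=sr\ne0\Rightarrow t=r$. $\tilde S=S\cup\{1\}$ ($1$ an adjoined identity); $s\mid t$ iff $t\in s\tilde S$; $r$ is a least common multiple of $s,t$ if $sS\cap tS=rS$, $s\mid r$, $t\mid r$; every pair has one. For $s\in S$: $F_s=\{x\in S':sx\ne0\}$, $E_s=sS\setminus\{0\}$, $\theta_s:F_s\to E_s$, $x\mapsto sx$. $\mathcal H(S)$ is the inverse semigroup of partial bijections of $S'$ generated by the $\theta_s$, and $\mathfrak E(S)=\{X\subseteq S':\mathrm{id}_X\in\mathcal H(S)\}$, a semilattice under $\cap$ with zero $\emptyset$. A string is a nonempty $\sigma\subseteq S$ with $0\notin\sigma$, closed under divisors, with any two elements having a common multiple in $\sigma$; maximal: not properly contained in another string; open: $\sigma=\{s\in S:\exists p\in S,\ sp\in\sigma\}$. For a string $\sigma$ and $X\in\mathfrak E(S)$ put $\varphi_\sigma(X)=1$ if for every $s\in\sigma$ there is $t\in\sigma\cap X$ with $s\mid t$, and $\varphi_\sigma(X)=0$ otherwise. A character of $\mathfrak E(S)$ is a nonzero map $\varphi:\mathfrak E(S)\to\{0,1\}$ with $\varphi(\emptyset)=0$ and $\varphi(X\cap Y)=\varphi(X)\varphi(Y)$; it is an ultracharacter if for every character $\psi$, $\varphi\le\psi$ pointwise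 implies $\varphi=\psi$. *)

theory Defs
  imports Main
begin

text \<open>The semigroup S with zero is the type 'a of class semigroup_mult and mult_zero
  (so 0 * x = 0 = x * 0). S' = UNIV - {0}. Partial bijections of S' are
  represented as relations (sets of pairs).\<close>

definition zero_left_cancellative :: "'a::{semigroup_mult,mult_zero} itself \<Rightarrow> bool" where
  "zero_left_cancellative _ \<longleftrightarrow> (\<forall>s t r::'a. s * t = s * r \<and> s * t \<noteq> 0 \<longrightarrow> t = r)"

text \<open>s divides t iff t \<in> s (S \<union> {1}), i.e. t = s or t = s u for some u.\<close>
definition sdvd :: "'a::{semigroup_mult,mult_zero} \<Rightarrow> 'a \<Rightarrow> bool" where
  "sdvd s t \<longleftrightarrow> t = s \<or> (\<exists>u. t = s * u)"

definition right_ideal :: "'a::{semigroup_mult,mult_zero} \<Rightarrow> 'a set" where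
  "right_ideal s = {s * u | u. True}"

definition is_lcm :: "'a::{semigroup_mult,mult_zero} \<Rightarrow> 'a \<Rightarrow> 'a \<Rightarrow> bool" where
  "is_lcm r s t \<longleftrightarrow> right_ideal s \<inter> right_ideal t = right_ideal r \<and> sdvd s r \<and> sdvd t r"

definition admits_lcm :: "'a::{semigroup_mult,mult_zero} itself \<Rightarrow> bool" where
  "admits_lcm _ \<longleftrightarrow> (\<forall>s t::'a. \<exists>r. is_lcm r s t)"

definition theta :: "'a::{semigroup_mult,mult_zero} \<Rightarrow> ('a \<times> 'a) set" where
  "theta s = {(x, s * x) | x. x \<noteq> 0 \<and> s * x \<noteq> 0}"

inductive_set HS :: "('a::{semigroup_mult,mult_zero} \<times> 'a) set set" where
  gen: "theta s \<in> HS"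
| comp: "f \<in> HS \<Longrightarrow> g \<in> HS \<Longrightarrow> f O g \<in> HS"
| inv: "f \<in> HS \<Longrightarrow> f\<inverse> \<in> HS"

definition ES :: "'a::{semigroup_mult,mult_zero} set set" where
  "ES = {X. X \<subseteq> UNIV - {0} \<and> Id_on X \<in> HS}"

definition is_string :: "'a::{semigroup_mult,mult_zero} set \<Rightarrow> bool" where
  "is_string \<sigma> \<longleftrightarrow> \<sigma> \<noteq> {} \<and> 0 \<notin> \<sigma>
     \<and> (\<forall>t\<in>\<sigma>. \<forall>s. sdvd s t \<longrightarrow> s \<in> \<sigma>)
     \<and> (\<forall>s\<in>\<sigma>. \<forall>t\<in>\<sigma>. \<exists>r\<in>\<sigma>. sdvd s r \<and> sdvd t r)"

definition maximal_string :: "'a::{semigroup_mult,mult_zero} set \<Rightarrow> bool" where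
  "maximal_string \<sigma> \<longleftrightarrow> is_string \<sigma> \<and> (\<forall>\<tau>. is_string \<tau> \<and> \<sigma> \<subseteq> \<tau> \<longrightarrow> \<tau> = \<sigma>)"

definition open_string :: "'a::{semigroup_mult,mult_zero} set \<Rightarrow> bool" where
  "open_string \<sigma> \<longleftrightarrow> \<sigma> = {s. \<exists>p. s * p \<in> \<sigma>}"

definition phi :: "'a::{semigroup_mult,mult_zero} set \<Rightarrow> 'a set \<Rightarrow> nat" where
  "phi \<sigma> X = (if \<forall>s\<in>\<sigma>. \<exists>t\<in>\<sigma> \<inter> X. sdvd s t then 1 else 0)"

text \<open>Characters of E(S), as maps E(S) \<rightarrow> {0,1} (only values on E(S) matter).\<close>
definition character :: "('a::{semigroup_mult,mult_zero} set \<Rightarrow> nat) \<Rightarrow> bool" where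
  "character \<phi> \<longleftrightarrow> (\<forall>X\<in>ES. \<phi> X \<in> {0, 1}) \<and> (\<exists>X\<in>(ES::'a set set). \<phi> X \<noteq> 0)
     \<and> \<phi> {} = 0 \<and> (\<forall>X\<in>ES. \<forall>Y\<in>ES. \<phi> (X \<inter> Y) = \<phi> X * \<phi> Y)"

definition ultracharacter :: "('a::{semigroup_mult,mult_zero} set \<Rightarrow> nat) \<Rightarrow> bool" where
  "ultracharacter \<phi> \<longleftrightarrow> character \<phi> \<and>
     (\<forall>\<psi>. character \<psi> \<and> (\<forall>X\<in>ES. \<phi> X \<le> \<psi> X) \<longrightarrow> (\<forall>X\<in>ES. \<phi> X = \<psi> X))"

end

theory Submission
  imports Defs
begin

text \<open>Every map in \<open>\<H>(S)\<close> is a right-equivariant partial bijection, so it carries the tail of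
  an open string \<open>\<sigma>\<close> on which it is defined to a tail generating another open string. By
  induction over the generators, the domain of every such map, and hence every \<open>X \<in> \<E>(S)\<close>,
  either eventually contains or eventually avoids \<open>\<sigma>\<close>; this makes \<open>\<phi>\<^sub>\<sigma>\<close> multiplicative.
  Conversely, a character \<open>\<psi> \<ge> \<phi>\<^sub>\<sigma>\<close> determines the set \<open>{s. \<psi>(E\<^sub>s) = 1} \<supseteq> \<sigma>\<close>, which is
  a string because \<open>E\<^sub>s \<inter> E\<^sub>t = E\<^sub>r\<close> for a least common multiple \<open>r\<close>; by maximality it is \<open>\<sigma>\<close>.
  Pulling \<open>\<psi>\<close> back along the generators \<open>\<theta>\<^sub>s\<close> and \<open>\<theta>\<^sub>s\<inverse>\<close> transports its string along them (here
  cancellation and lcms are used once more), and a second induction over \<open>\<H>(S)\<close> shows that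
  \<open>\<psi>(X) = 1\<close> forces \<open>\<sigma>\<close> to lie eventually in \<open>X\<close>, i.e. \<open>\<psi> = \<phi>\<^sub>\<sigma>\<close>.\<close>

lemma sdvd_refl [simp]: "sdvd s s"
  by (simp add: sdvd_def)

lemma sdvd_mult [simp]: "sdvd s (s * u)"
  by (auto simp: sdvd_def)

lemma sdvd_trans: "sdvd a b \<Longrightarrow> sdvd b c \<Longrightarrow> sdvd a c"
  unfolding sdvd_def by (metis mult.assoc)

lemma sdvd_mult_right: "sdvd a b \<Longrightarrow> sdvd a (b * u)"
  using sdvd_trans sdvd_mult by blast

lemma sdvd_0_left: "sdvd 0 x \<Longrightarrow> x = 0"
  by (auto simp: sdvd_def)

lemma sdvd_mult_right_proper: "sdvd s c \<Longrightarrow> \<exists>u. c * p = s * u"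
  unfolding sdvd_def by (metis mult.assoc)

lemma sdvdE:
  assumes "sdvd s t"
  obtains "t = s" | u where "t = s * u"
  using assms unfolding sdvd_def by blast

text \<open>The set \<open>E\<^sub>s = sS \ {0}\<close>; it need not contain \<open>s\<close>, as \<open>S\<close> has no unit.\<close>

definition nz_ideal :: "'a::{semigroup_mult,mult_zero} \<Rightarrow> 'a set" where
  "nz_ideal s = right_ideal s - {0}"

lemma nz_ideal_iff: "x \<in> nz_ideal s \<longleftrightarrow> x \<noteq> 0 \<and> (\<exists>u. x = s * u)"
  by (auto simp: nz_ideal_def right_ideal_def)

lemma nz_ideal_0: "nz_ideal 0 = {}"
  by (auto simp: nz_ideal_iff)

lemma nz_ideal_antimono: "sdvd a b \<Longrightarrow> nz_ideal b \<subseteq> nz_ideal a"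
  by (auto simp: nz_ideal_iff sdvd_def) (metis mult.assoc)

lemma nz_ideal_sdvd_closed: "t0 \<in> nz_ideal s \<Longrightarrow> sdvd t0 t \<Longrightarrow> t \<noteq> 0 \<Longrightarrow> t \<in> nz_ideal s"
  by (auto simp: nz_ideal_iff sdvd_def) (metis mult.assoc)

lemma is_lcm_nz_ideal: "is_lcm r s t \<Longrightarrow> nz_ideal s \<inter> nz_ideal t = nz_ideal r"
  unfolding is_lcm_def nz_ideal_def by auto

lemma string_directed: "is_string \<sigma> \<Longrightarrow> a \<in> \<sigma> \<Longrightarrow> b \<in> \<sigma> \<Longrightarrow> \<exists>c\<in>\<sigma>. sdvd a c \<and> sdvd b c"
  unfolding is_string_def by blast

lemma string_down_closed: "is_string \<sigma> \<Longrightarrow> t \<in> \<sigma> \<Longrightarrow> sdvd s t \<Longrightarrow> s \<in> \<sigma>"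
  unfolding is_string_def by blast

lemma string_nonzero: "is_string \<sigma> \<Longrightarrow> t \<in> \<sigma> \<Longrightarrow> t \<noteq> 0"
  unfolding is_string_def by blast

lemma string_nonempty: "is_string \<sigma> \<Longrightarrow> \<exists>t. t \<in> \<sigma>"
  unfolding is_string_def by blast

lemma open_stringD: "open_string \<sigma> \<Longrightarrow> s \<in> \<sigma> \<Longrightarrow> \<exists>p. s * p \<in> \<sigma>"
  unfolding open_string_def by blast

subsection \<open>Eventually along a string\<close>

definition eventually_on :: "'a::{semigroup_mult,mult_zero} set \<Rightarrow> ('a \<Rightarrow> bool) \<Rightarrow> bool" where
  "eventually_on \<sigma> P \<longleftrightarrow> (\<exists>t0\<in>\<sigma>. \<forall>t\<in>\<sigma>. sdvd t0 t \<longrightarrow> P t)"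

lemma eventually_on_exists: "eventually_on \<sigma> P \<Longrightarrow> \<exists>t\<in>\<sigma>. P t"
  unfolding eventually_on_def by (meson sdvd_refl)

lemma eventually_on_mono: "eventually_on \<sigma> P \<Longrightarrow> (\<And>t. t \<in> \<sigma> \<Longrightarrow> P t \<Longrightarrow> Q t) \<Longrightarrow> eventually_on \<sigma> Q"
  unfolding eventually_on_def by blast

lemma eventually_on_conj:
  "is_string \<sigma> \<Longrightarrow> eventually_on \<sigma> P \<Longrightarrow> eventually_on \<sigma> Q \<Longrightarrow> eventually_on \<sigma> (\<lambda>t. P t \<and> Q t)"
  unfolding eventually_on_def by (meson string_directed sdvd_trans)

lemma eventually_on_frequently:
  "is_string \<sigma> \<Longrightarrow> eventually_on \<sigma> P \<Longrightarrow> s \<in> \<sigma> \<Longrightarrow> \<exists>t\<in>\<sigma>. sdvd s t \<and> P t"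
  unfolding eventually_on_def by (meson string_directed sdvd_trans)

lemma phi_eq_1_if_eventually: "is_string \<sigma> \<Longrightarrow> eventually_on \<sigma> (\<lambda>t. t \<in> X) \<Longrightarrow> phi \<sigma> X = 1"
  unfolding phi_def using eventually_on_frequently[of \<sigma> "\<lambda>t. t \<in> X"] by auto

lemma phi_eq_0_if_eventually_not: "eventually_on \<sigma> (\<lambda>t. t \<notin> X) \<Longrightarrow> phi \<sigma> X = 0"
  unfolding phi_def eventually_on_def by fastforce

lemma phi_nz_ideal:
  assumes st: "is_string \<sigma>" and op: "open_string \<sigma>" and s: "s \<in> \<sigma>"
  shows "phi \<sigma> (nz_ideal s) = 1"
proof -
  have "\<exists>t\<in>\<sigma> \<inter> nz_ideal s. sdvd r t" if r: "r \<in> \<sigma>" for r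
  proof -
    obtain c where c: "c \<in> \<sigma>" "sdvd r c" "sdvd s c" using string_directed[OF st r s] by blast
    obtain p where p: "c * p \<in> \<sigma>" using open_stringD[OF op c(1)] by blast
    have "c * p \<in> nz_ideal s"
      using string_nonzero[OF st p] sdvd_mult_right_proper[OF c(3)] by (simp add: nz_ideal_iff)
    then show ?thesis using p sdvd_mult_right[OF c(2)] by blast
  qed
  then show ?thesis unfolding phi_def by simp
qed

subsection \<open>Right-equivariant partial maps and their action on strings\<close>

definition right_equivariant :: "('a::{semigroup_mult,mult_zero} \<times> 'a) set \<Rightarrow> bool" where
  "right_equivariant f \<longleftrightarrow> (\<forall>x y u. (x, y) \<in> f \<longrightarrow> x * u \<in> Domain f \<longrightarrow> (x * u, y * u) \<in> f)"

definition equivariant_pmap :: "('a::{semigroup_mult,mult_zero} \<times> 'a) set \<Rightarrow> bool" where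
  "equivariant_pmap f \<longleftrightarrow>
     single_valued f \<and> (\<forall>x y. (x, y) \<in> f \<longrightarrow> x \<noteq> 0 \<and> y \<noteq> 0) \<and> right_equivariant f"

lemma equivariant_pmap_unique: "equivariant_pmap f \<Longrightarrow> (x, y) \<in> f \<Longrightarrow> (x, y') \<in> f \<Longrightarrow> y = y'"
  unfolding equivariant_pmap_def single_valued_def by blast

lemma equivariant_pmap_nonzero: "equivariant_pmap f \<Longrightarrow> (x, y) \<in> f \<Longrightarrow> x \<noteq> 0 \<and> y \<noteq> 0"
  unfolding equivariant_pmap_def by blast

lemma equivariant_pmap_mult: "equivariant_pmap f \<Longrightarrow> (x, y) \<in> f \<Longrightarrow> x * u \<in> Domain f \<Longrightarrow> (x * u, y * u) \<in> f"
  unfolding equivariant_pmap_def right_equivariant_def by blast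

lemma equivariant_pmap_sdvd:
  assumes "equivariant_pmap f" "(x, y) \<in> f" "sdvd x x'" "(x', y') \<in> f"
  shows "sdvd y y'"
  using assms(3)
proof (cases rule: sdvdE)
  case 1
  then show ?thesis using equivariant_pmap_unique[OF assms(1,2)] assms(4) by simp
next
  case (2 u)
  then have "(x', y * u) \<in> f" using equivariant_pmap_mult[OF assms(1,2)] assms(4) by blast
  then show ?thesis using equivariant_pmap_unique[OF assms(1,4)] by simp
qed

lemma equivariant_pmap_relcomp:
  assumes f: "equivariant_pmap f" and g: "equivariant_pmap g"
  shows "equivariant_pmap (f O g)"
proof -
  have "(x * u, z * u) \<in> f O g" if "(x, z) \<in> f O g" and "x * u \<in> Domain (f O g)" for x z u
  proof -
    from that obtain y y' z' where xy: "(x, y) \<in> f" and yz: "(y, z) \<in> g"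
      and "(x * u, y') \<in> f" and "(y', z') \<in> g" by blast
    moreover have xyu: "(x * u, y * u) \<in> f" using equivariant_pmap_mult[OF f xy] \<open>(x * u, y') \<in> f\<close> by blast
    ultimately have "y * u \<in> Domain g" using equivariant_pmap_unique[OF f] by blast
    then show ?thesis using xyu equivariant_pmap_mult[OF g yz] by blast
  qed
  moreover have "single_valued (f O g)"
    using f g unfolding equivariant_pmap_def by (simp add: single_valued_relcomp)
  ultimately show ?thesis
    using f g unfolding equivariant_pmap_def right_equivariant_def by blast
qed

definition germ_onto :: "('a::{semigroup_mult,mult_zero} \<times> 'a) set \<Rightarrow> 'a set \<Rightarrow> 'a set \<Rightarrow> bool" where
  "germ_onto f \<sigma> \<tau> \<longleftrightarrow>
     eventually_on \<sigma> (\<lambda>t. \<exists>y. (t, y) \<in> f \<and> y \<in> \<tau>) \<and> (\<forall>y\<in>\<tau>. \<exists>t\<in>\<sigma>. \<exists>x. (t, x) \<in> f \<and> sdvd y x)"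

lemma germ_onto_nonempty: "germ_onto f \<sigma> \<tau> \<Longrightarrow> \<tau> \<noteq> {}"
  unfolding germ_onto_def using eventually_on_exists by fast

lemma germ_onto_eventually:
  assumes st: "is_string \<sigma>" and f: "equivariant_pmap f" and germ: "germ_onto f \<sigma> \<tau>"
    and P: "eventually_on \<tau> P"
  shows "eventually_on \<sigma> (\<lambda>t. \<exists>y. (t, y) \<in> f \<and> y \<in> \<tau> \<and> P y)"
proof -
  obtain t0 where t0: "t0 \<in> \<sigma>" and into: "\<And>t. t \<in> \<sigma> \<Longrightarrow> sdvd t0 t \<Longrightarrow> \<exists>y. (t, y) \<in> f \<and> y \<in> \<tau>"
    using germ unfolding germ_onto_def eventually_on_def by blast
  obtain y0 where y0: "y0 \<in> \<tau>" and P_beyond: "\<And>y. y \<in> \<tau> \<Longrightarrow> sdvd y0 y \<Longrightarrow> P y"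
    using P unfolding eventually_on_def by blast
  obtain t1 x1 where t1: "t1 \<in> \<sigma>" "(t1, x1) \<in> f" "sdvd y0 x1"
    using germ y0 unfolding germ_onto_def by blast
  obtain t2 where t2: "t2 \<in> \<sigma>" "sdvd t0 t2" "sdvd t1 t2" using string_directed[OF st t0 t1(1)] by blast
  show ?thesis
    unfolding eventually_on_def
  proof (intro bexI[OF _ t2(1)] ballI impI)
    fix t assume t: "t \<in> \<sigma>" "sdvd t2 t"
    then obtain y where y: "(t, y) \<in> f" "y \<in> \<tau>" using into sdvd_trans[OF t2(2)] by blast
    have "sdvd x1 y" using equivariant_pmap_sdvd[OF f t1(2) sdvd_trans[OF t2(3) t(2)] y(1)] .
    then show "\<exists>y. (t, y) \<in> f \<and> y \<in> \<tau> \<and> P y" using y P_beyond sdvd_trans[OF t1(3)] by blast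
  qed
qed

lemma germ_onto_relcomp:
  assumes st: "is_string \<sigma>" and f: "equivariant_pmap f" and g: "equivariant_pmap g"
    and fg: "germ_onto f \<sigma> \<tau>" and gg: "germ_onto g \<tau> \<rho>"
  shows "germ_onto (f O g) \<sigma> \<rho>"
proof -
  have tail: "eventually_on \<sigma> (\<lambda>t. \<exists>y. (t, y) \<in> f \<and> y \<in> \<tau> \<and> (\<exists>z. (y, z) \<in> g \<and> z \<in> \<rho>))"
    using germ_onto_eventually[OF st f fg] gg unfolding germ_onto_def by blast
  then obtain t0 where t0: "t0 \<in> \<sigma>"
    and beyond: "\<And>t. t \<in> \<sigma> \<Longrightarrow> sdvd t0 t \<Longrightarrow> \<exists>y z. (t, y) \<in> f \<and> (y, z) \<in> g"
    unfolding eventually_on_def by blast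
  have "\<exists>t\<in>\<sigma>. \<exists>w. (t, w) \<in> f O g \<and> sdvd z w" if "z \<in> \<rho>" for z
  proof -
    obtain y w where yw: "y \<in> \<tau>" "(y, w) \<in> g" "sdvd z w" using gg \<open>z \<in> \<rho>\<close> unfolding germ_onto_def by blast
    obtain t x where tx: "t \<in> \<sigma>" "(t, x) \<in> f" "sdvd y x" using fg yw(1) unfolding germ_onto_def by blast
    obtain t' where t': "t' \<in> \<sigma>" "sdvd t t'" "sdvd t0 t'" using string_directed[OF st tx(1) t0] by blast
    obtain x' w' where x'w': "(t', x') \<in> f" "(x', w') \<in> g" using beyond t' by blast
    have "sdvd y x'" using tx(3) equivariant_pmap_sdvd[OF f tx(2) t'(2) x'w'(1)] sdvd_trans by blast
    then have "sdvd w w'" using equivariant_pmap_sdvd[OF g yw(2) _ x'w'(2)] by blast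
    then show ?thesis using t'(1) x'w' yw(3) sdvd_trans by blast
  qed
  moreover have "eventually_on \<sigma> (\<lambda>t. \<exists>z. (t, z) \<in> f O g \<and> z \<in> \<rho>)"
    using tail by (rule eventually_on_mono) blast
  ultimately show ?thesis unfolding germ_onto_def by blast
qed

lemma germ_onto_open_string:
  assumes st: "is_string \<sigma>" and op: "open_string \<sigma>" and f: "equivariant_pmap f"
    and germ: "germ_onto f \<sigma> \<tau>" and st': "is_string \<tau>"
  shows "open_string \<tau>"
  unfolding open_string_def
proof (intro set_eqI iffI)
  fix y assume "y \<in> \<tau>"
  obtain t0 where t0: "t0 \<in> \<sigma>" and into: "\<And>t. t \<in> \<sigma> \<Longrightarrow> sdvd t0 t \<Longrightarrow> \<exists>y. (t, y) \<in> f \<and> y \<in> \<tau>"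
    using germ unfolding germ_onto_def eventually_on_def by blast
  obtain t x where tx: "t \<in> \<sigma>" "(t, x) \<in> f" "sdvd y x" using germ \<open>y \<in> \<tau>\<close> unfolding germ_onto_def by blast
  obtain c where c: "c \<in> \<sigma>" "sdvd t0 c" "sdvd t c" using string_directed[OF st t0 tx(1)] by blast
  obtain p where p: "c * p \<in> \<sigma>" using open_stringD[OF op c(1)] by blast
  obtain xc where xc: "(c, xc) \<in> f" using into c by blast
  obtain z where z: "(c * p, z) \<in> f" "z \<in> \<tau>" using into[OF p sdvd_mult_right[OF c(2)]] by blast
  have "z = xc * p"
    using equivariant_pmap_mult[OF f xc] z(1) equivariant_pmap_unique[OF f z(1)] by blast
  moreover have "sdvd y xc" using tx(3) equivariant_pmap_sdvd[OF f tx(2) c(3) xc] sdvd_trans by blast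
  ultimately obtain u where "z = y * u" using sdvd_mult_right_proper by blast
  then show "y \<in> {s. \<exists>p. s * p \<in> \<tau>}" using z(2) by blast
next
  fix y assume "y \<in> {s. \<exists>p. s * p \<in> \<tau>}"
  then show "y \<in> \<tau>" using string_down_closed[OF st'] sdvd_mult by blast
qed

definition string_image :: "('a::{semigroup_mult,mult_zero} \<times> 'a) set \<Rightarrow> 'a set \<Rightarrow> 'a set" where
  "string_image f \<sigma> = {y. \<exists>t\<in>\<sigma>. \<exists>x. (t, x) \<in> f \<and> sdvd y x}"

lemma germ_onto_string_image:
  "eventually_on \<sigma> (\<lambda>t. t \<in> Domain f) \<Longrightarrow> germ_onto f \<sigma> (string_image f \<sigma>)"
  unfolding germ_onto_def string_image_def
  by (auto elim!: eventually_on_mono intro: sdvd_refl)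

lemma string_image_is_string:
  assumes st: "is_string \<sigma>" and f: "equivariant_pmap f" and dom: "eventually_on \<sigma> (\<lambda>t. t \<in> Domain f)"
  shows "is_string (string_image f \<sigma>)"
proof -
  let ?\<tau> = "string_image f \<sigma>"
  obtain t0 where t0: "t0 \<in> \<sigma>" and T: "\<And>t. t \<in> \<sigma> \<Longrightarrow> sdvd t0 t \<Longrightarrow> t \<in> Domain f"
    using dom unfolding eventually_on_def by blast
  have "?\<tau> \<noteq> {}" using germ_onto_nonempty[OF germ_onto_string_image[OF dom]] .
  moreover have "0 \<notin> ?\<tau>"
    unfolding string_image_def using equivariant_pmap_nonzero[OF f] sdvd_0_left by blast
  moreover have "s \<in> ?\<tau>" if "t \<in> ?\<tau>" "sdvd s t" for s t
    using that sdvd_trans unfolding string_image_def by blast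
  moreover have "\<exists>r\<in>?\<tau>. sdvd a r \<and> sdvd b r" if ab: "a \<in> ?\<tau>" "b \<in> ?\<tau>" for a b
  proof -
    obtain t1 x1 t2 x2 where 1: "t1 \<in> \<sigma>" "(t1, x1) \<in> f" "sdvd a x1"
      and 2: "t2 \<in> \<sigma>" "(t2, x2) \<in> f" "sdvd b x2"
      using ab unfolding string_image_def by blast
    obtain c where c: "c \<in> \<sigma>" "sdvd t1 c" "sdvd t2 c" using string_directed[OF st 1(1) 2(1)] by blast
    obtain d where d: "d \<in> \<sigma>" "sdvd t0 d" "sdvd c d" using string_directed[OF st t0 c(1)] by blast
    obtain y where y: "(d, y) \<in> f" using T d by blast
    have "sdvd x1 y" using equivariant_pmap_sdvd[OF f 1(2) sdvd_trans[OF c(2) d(3)] y] .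
    moreover have "sdvd x2 y" using equivariant_pmap_sdvd[OF f 2(2) sdvd_trans[OF c(3) d(3)] y] .
    moreover have "y \<in> ?\<tau>" using d(1) y unfolding string_image_def by (blast intro: sdvd_refl)
    ultimately show ?thesis using 1(3) 2(3) sdvd_trans by blast
  qed
  ultimately show ?thesis unfolding is_string_def by blast
qed

subsection \<open>The maps \<open>\<theta>\<^sub>s\<close> and the inverse semigroup they generate\<close>

lemma Domain_theta: "Domain (theta s) = {x. x \<noteq> 0 \<and> s * x \<noteq> 0}"
  unfolding theta_def by auto

lemma Domain_converse_theta: "Domain ((theta s)\<inverse>) = nz_ideal s"
  by (force simp: theta_def nz_ideal_iff)

lemma equivariant_pmap_theta: "equivariant_pmap (theta s)"
  unfolding equivariant_pmap_def right_equivariant_def theta_def single_valued_def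
  by (auto simp: mult.assoc)

lemma Int_ES:
  assumes "X \<in> ES" "Y \<in> ES"
  shows "X \<inter> Y \<in> ES"
proof -
  have "Id_on (X \<inter> Y) = Id_on X O Id_on Y" by auto
  then show ?thesis using assms HS.comp unfolding ES_def by auto
qed

lemma Id_on_HS: "X \<in> ES \<Longrightarrow> Id_on X \<in> HS"
  unfolding ES_def by auto

context
  assumes cancellative: "zero_left_cancellative TYPE('a::{semigroup_mult,mult_zero})"
begin

lemma mult_left_cancel: "(s::'a) * t = s * r \<Longrightarrow> s * t \<noteq> 0 \<Longrightarrow> t = r"
  using cancellative unfolding zero_left_cancellative_def by blast

lemma equivariant_pmap_converse_theta: "equivariant_pmap ((theta (s::'a))\<inverse>)"
  unfolding equivariant_pmap_def right_equivariant_def theta_def single_valued_def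
  by (auto simp: mult.assoc) (metis mult_left_cancel)

lemma HS_equivariant_pmap: "f \<in> HS \<Longrightarrow> equivariant_pmap (f::('a \<times> 'a) set) \<and> equivariant_pmap (f\<inverse>)"
proof (induction rule: HS.induct)
  case (gen s)
  then show ?case using equivariant_pmap_theta equivariant_pmap_converse_theta by blast
next
  case (comp f g)
  then show ?case
    using equivariant_pmap_relcomp[of f g] equivariant_pmap_relcomp[of "g\<inverse>" "f\<inverse>"]
    by (simp add: converse_relcomp)
next
  case (inv f)
  then show ?case by simp
qed

lemma HS_Domain_ES:
  assumes f: "f \<in> HS"
  shows "Domain (f::('a \<times> 'a) set) \<in> ES"
proof -
  have "Id_on (Domain f) = f O f\<inverse>"
    using equivariant_pmap_unique[OF conjunct2[OF HS_equivariant_pmap[OF f]]] by auto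
  moreover have "f O f\<inverse> \<in> HS" using f by (intro HS.comp HS.inv)
  ultimately show ?thesis
    unfolding ES_def using equivariant_pmap_nonzero[OF conjunct1[OF HS_equivariant_pmap[OF f]]] by auto
qed

lemma HS_Image_converse_ES:
  assumes f: "f \<in> HS" and X: "X \<in> ES"
  shows "(f::('a \<times> 'a) set)\<inverse> `` X \<in> ES"
proof -
  have "f\<inverse> `` X = Domain (f O Id_on X)" by auto
  moreover have "f O Id_on X \<in> HS" using f Id_on_HS[OF X] by (rule HS.comp)
  ultimately show ?thesis using HS_Domain_ES by simp
qed

lemma nz_ideal_ES: "nz_ideal (s::'a) \<in> ES"
  using HS_Domain_ES[OF HS.inv[OF HS.gen]] Domain_converse_theta by metis

lemma Domain_theta_ES: "Domain (theta (s::'a)) \<in> ES"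
  using HS_Domain_ES[OF HS.gen] .

end

lemma character_01: "character \<psi> \<Longrightarrow> X \<in> ES \<Longrightarrow> \<psi> X = 0 \<or> \<psi> X = 1"
  unfolding character_def by blast

lemma character_Int: "character \<psi> \<Longrightarrow> X \<in> ES \<Longrightarrow> Y \<in> ES \<Longrightarrow> \<psi> (X \<inter> Y) = \<psi> X * \<psi> Y"
  unfolding character_def by blast

lemma character_empty: "character \<psi> \<Longrightarrow> \<psi> {} = 0"
  unfolding character_def by blast

lemma character_Int_eq_1:
  "character \<psi> \<Longrightarrow> X \<in> ES \<Longrightarrow> Y \<in> ES \<Longrightarrow> \<psi> X = 1 \<Longrightarrow> \<psi> Y = 1 \<Longrightarrow> \<psi> (X \<inter> Y) = 1"
  by (simp add: character_Int)

lemma character_mono: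
  assumes "character \<psi>" "X \<in> ES" "Y \<in> ES" "X \<subseteq> Y" "\<psi> X = 1"
  shows "\<psi> Y = 1"
  using character_Int[OF assms(1-3)] assms(4,5) by (simp add: Int_absorb2)

subsection \<open>\<open>\<phi>\<^sub>\<sigma>\<close> is a character for every open string \<open>\<sigma>\<close>\<close>

definition domain_decided :: "('a::{semigroup_mult,mult_zero} \<times> 'a) set \<Rightarrow> bool" where
  "domain_decided f \<longleftrightarrow> (\<forall>\<sigma>. is_string \<sigma> \<and> open_string \<sigma> \<longrightarrow>
     eventually_on \<sigma> (\<lambda>t. t \<notin> Domain f) \<or> eventually_on \<sigma> (\<lambda>t. t \<in> Domain f))"

lemma domain_decided_relcomp:
  assumes f: "equivariant_pmap f" and df: "domain_decided f" and dg: "domain_decided g"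
  shows "domain_decided (f O g)"
  unfolding domain_decided_def
proof (intro allI impI, elim conjE)
  fix \<sigma> :: "'a set" assume st: "is_string \<sigma>" and op: "open_string \<sigma>"
  consider "eventually_on \<sigma> (\<lambda>t. t \<notin> Domain f)" | "eventually_on \<sigma> (\<lambda>t. t \<in> Domain f)"
    using df st op unfolding domain_decided_def by blast
  then show "eventually_on \<sigma> (\<lambda>t. t \<notin> Domain (f O g)) \<or> eventually_on \<sigma> (\<lambda>t. t \<in> Domain (f O g))"
  proof cases
    case 1
    then have "eventually_on \<sigma> (\<lambda>t. t \<notin> Domain (f O g))" by (rule eventually_on_mono) blast
    then show ?thesis ..
  next
    case dom: 2
    let ?\<tau> = "string_image f \<sigma>"
    have germ: "germ_onto f \<sigma> ?\<tau>" using germ_onto_string_image[OF dom] .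
    have "is_string ?\<tau>" using string_image_is_string[OF st f dom] .
    moreover have "open_string ?\<tau>" using germ_onto_open_string[OF st op f germ] calculation .
    ultimately consider "eventually_on ?\<tau> (\<lambda>y. y \<notin> Domain g)" | "eventually_on ?\<tau> (\<lambda>y. y \<in> Domain g)"
      using dg unfolding domain_decided_def by blast
    then show ?thesis
    proof cases
      case 1
      have "eventually_on \<sigma> (\<lambda>t. t \<notin> Domain (f O g))"
        using germ_onto_eventually[OF st f germ 1]
        by (rule eventually_on_mono) (use equivariant_pmap_unique[OF f] in blast)
      then show ?thesis ..
    next
      case 2
      have "eventually_on \<sigma> (\<lambda>t. t \<in> Domain (f O g))"
        using germ_onto_eventually[OF st f germ 2] by (rule eventually_on_mono) blast
      then show ?thesis ..
    qed
  qed
qed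

lemma domain_decided_theta: "domain_decided (theta s)"
  unfolding domain_decided_def Domain_theta
proof (intro allI impI, elim conjE)
  fix \<sigma> :: "'a set" assume st: "is_string \<sigma>"
  show "eventually_on \<sigma> (\<lambda>t. t \<notin> {x. x \<noteq> 0 \<and> s * x \<noteq> 0}) \<or> eventually_on \<sigma> (\<lambda>t. t \<in> {x. x \<noteq> 0 \<and> s * x \<noteq> 0})"
  proof (cases "\<exists>t0\<in>\<sigma>. s * t0 = 0")
    case True
    then obtain t0 where "t0 \<in> \<sigma>" "s * t0 = 0" by blast
    moreover have "s * t = 0" if "sdvd t0 t" for t
      using that \<open>s * t0 = 0\<close> by (cases rule: sdvdE) (auto simp flip: mult.assoc)
    ultimately show ?thesis unfolding eventually_on_def by blast
  next
    case False
    then show ?thesis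
      using string_nonempty[OF st] string_nonzero[OF st] unfolding eventually_on_def by blast
  qed
qed

lemma domain_decided_converse_theta: "domain_decided ((theta s)\<inverse>)"
  unfolding domain_decided_def Domain_converse_theta
proof (intro allI impI, elim conjE)
  fix \<sigma> :: "'a set" assume st: "is_string \<sigma>"
  show "eventually_on \<sigma> (\<lambda>t. t \<notin> nz_ideal s) \<or> eventually_on \<sigma> (\<lambda>t. t \<in> nz_ideal s)"
  proof (cases "\<exists>t0\<in>\<sigma>. t0 \<in> nz_ideal s")
    case True
    then show ?thesis
      using nz_ideal_sdvd_closed string_nonzero[OF st] unfolding eventually_on_def by blast
  next
    case False
    then show ?thesis using string_nonempty[OF st] unfolding eventually_on_def by blast
  qed
qed

context
  assumes cancellative: "zero_left_cancellative TYPE('a::{semigroup_mult,mult_zero})"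
begin

lemma HS_domain_decided: "f \<in> HS \<Longrightarrow> domain_decided (f::('a \<times> 'a) set) \<and> domain_decided (f\<inverse>)"
proof (induction rule: HS.induct)
  case (gen s)
  then show ?case using domain_decided_theta domain_decided_converse_theta by blast
next
  case (comp f g)
  then show ?case
    using domain_decided_relcomp[of f g] domain_decided_relcomp[of "g\<inverse>" "f\<inverse>"]
      HS_equivariant_pmap[OF cancellative] by (simp add: converse_relcomp)
next
  case (inv f)
  then show ?case by simp
qed

lemma phi_eq_1_iff_eventually:
  assumes X: "X \<in> ES" and st: "is_string \<sigma>" and op: "open_string \<sigma>"
  shows "phi \<sigma> (X::'a set) = 1 \<longleftrightarrow> eventually_on \<sigma> (\<lambda>t. t \<in> X)"
proof -
  have "domain_decided (Id_on X)" using HS_domain_decided[OF Id_on_HS[OF X]] by blast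
  then have "eventually_on \<sigma> (\<lambda>t. t \<notin> X) \<or> eventually_on \<sigma> (\<lambda>t. t \<in> X)"
    using st op unfolding domain_decided_def by simp
  then show ?thesis using phi_eq_1_if_eventually[OF st] phi_eq_0_if_eventually_not by force
qed

lemma phi_character:
  assumes st: "is_string \<sigma>" and op: "open_string \<sigma>"
  shows "character (phi (\<sigma>::'a set))"
  unfolding character_def
proof (intro conjI ballI)
  obtain s where s: "s \<in> \<sigma>" using string_nonempty[OF st] by blast
  show "\<exists>X\<in>ES. phi \<sigma> X \<noteq> 0"
    using phi_nz_ideal[OF st op s] nz_ideal_ES[OF cancellative] by (intro bexI[of _ "nz_ideal s"]) simp_all
  show "phi \<sigma> {} = 0" using s unfolding phi_def by auto
next
  fix X :: "'a set"
  show "phi \<sigma> X \<in> {0, 1}" unfolding phi_def by simp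
next
  fix X Y :: "'a set" assume X: "X \<in> ES" and Y: "Y \<in> ES"
  show "phi \<sigma> (X \<inter> Y) = phi \<sigma> X * phi \<sigma> Y"
  proof (cases "phi \<sigma> X = 1 \<and> phi \<sigma> Y = 1")
    case True
    then have "eventually_on \<sigma> (\<lambda>t. t \<in> X)" "eventually_on \<sigma> (\<lambda>t. t \<in> Y)"
      using phi_eq_1_iff_eventually[OF _ st op] X Y by blast+
    then have "eventually_on \<sigma> (\<lambda>t. t \<in> X \<inter> Y)" using eventually_on_conj[OF st] by fastforce
    then show ?thesis using phi_eq_1_if_eventually[OF st] True by simp
  next
    case False
    then have "phi \<sigma> X = 0 \<or> phi \<sigma> Y = 0" unfolding phi_def by presburger
    then show ?thesis unfolding phi_def by (auto split: if_splits)
  qed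
qed

end

subsection \<open>The string of a character\<close>

definition char_string :: "('a::{semigroup_mult,mult_zero} set \<Rightarrow> nat) \<Rightarrow> 'a set" where
  "char_string \<psi> = {s. \<psi> (nz_ideal s) = 1}"

definition char_pullback :: "('a set \<Rightarrow> nat) \<Rightarrow> ('a \<times> 'a) set \<Rightarrow> 'a set \<Rightarrow> nat" where
  "char_pullback \<psi> f Y = \<psi> (f\<inverse> `` Y)"

lemma char_pullback_relcomp: "char_pullback (char_pullback \<psi> f) g = char_pullback \<psi> (f O g)"
  by (simp add: char_pullback_def converse_relcomp relcomp_Image fun_eq_iff)

lemma char_string_nonzero: "character \<psi> \<Longrightarrow> 0 \<notin> char_string \<psi>"
  unfolding char_string_def by (simp add: character_empty nz_ideal_0)

context
  assumes cancellative: "zero_left_cancellative TYPE('a::{semigroup_mult,mult_zero})"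
begin

lemma character_pullback:
  assumes f: "f \<in> HS" and c: "character \<psi>" and d: "\<psi> (Domain f) = 1"
  shows "character (char_pullback \<psi> (f::('a \<times> 'a) set))"
  unfolding character_def char_pullback_def
proof (intro conjI ballI)
  have "Range f \<in> ES" using HS_Domain_ES[OF cancellative HS.inv[OF f]] by simp
  moreover have "f\<inverse> `` Range f = Domain f" by auto
  ultimately show "\<exists>X\<in>ES. \<psi> (f\<inverse> `` X) \<noteq> 0" using d by (intro bexI[of _ "Range f"]) simp_all
  show "\<psi> (f\<inverse> `` {}) = 0" using character_empty[OF c] by simp
next
  fix X :: "'a set" assume "X \<in> ES"
  then show "\<psi> (f\<inverse> `` X) \<in> {0, 1}"
    using character_01[OF c HS_Image_converse_ES[OF cancellative f]] by blast
next
  fix X Y :: "'a set" assume "X \<in> ES" "Y \<in> ES"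
  moreover have "f\<inverse> `` (X \<inter> Y) = f\<inverse> `` X \<inter> f\<inverse> `` Y"
    using HS_equivariant_pmap[OF cancellative f] by (simp add: Image_Int_eq equivariant_pmap_def)
  ultimately show "\<psi> (f\<inverse> `` (X \<inter> Y)) = \<psi> (f\<inverse> `` X) * \<psi> (f\<inverse> `` Y)"
    using character_Int[OF c HS_Image_converse_ES[OF cancellative f] HS_Image_converse_ES[OF cancellative f]]
    by simp
qed

lemma mult_nonzero_if_char_string:
  assumes c: "character \<psi>" and d: "\<psi> (Domain (theta s)) = 1" and t: "t \<in> char_string \<psi>"
  shows "(s::'a) * t \<noteq> 0"
proof
  assume st0: "s * t = 0"
  have "Domain (theta s) \<inter> nz_ideal t = {}"
    using st0 by (auto simp: Domain_theta nz_ideal_iff simp flip: mult.assoc)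
  moreover have "\<psi> (Domain (theta s) \<inter> nz_ideal t) = 1"
    using character_Int_eq_1[OF c Domain_theta_ES[OF cancellative] nz_ideal_ES[OF cancellative] d] t
    unfolding char_string_def by simp
  ultimately show False using character_empty[OF c] by simp
qed

lemma theta_char_string:
  assumes c: "character \<psi>" and d: "\<psi> (Domain (theta s)) = 1" and t: "t \<in> char_string \<psi>"
  shows "(t, s * t) \<in> theta (s::'a) \<and> s * t \<in> char_string (char_pullback \<psi> (theta s))"
proof
  have nz: "t \<noteq> 0" "s * t \<noteq> 0"
    using char_string_nonzero[OF c] t mult_nonzero_if_char_string[OF c d t] by auto
  then show "(t, s * t) \<in> theta s" unfolding theta_def by blast
  have "Domain (theta s) \<inter> nz_ideal t \<subseteq> (theta s)\<inverse> `` nz_ideal (s * t)"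
  proof
    fix x assume "x \<in> Domain (theta s) \<inter> nz_ideal t"
    then obtain u where "x = t * u" "x \<noteq> 0" "s * x \<noteq> 0" by (auto simp: Domain_theta nz_ideal_iff)
    then have "(s * x, x) \<in> (theta s)\<inverse>" "s * x \<in> nz_ideal (s * t)"
      by (auto simp: theta_def nz_ideal_iff mult.assoc)
    then show "x \<in> (theta s)\<inverse> `` nz_ideal (s * t)" by blast
  qed
  moreover have "\<psi> (Domain (theta s) \<inter> nz_ideal t) = 1"
    using character_Int_eq_1[OF c Domain_theta_ES[OF cancellative] nz_ideal_ES[OF cancellative] d] t
    unfolding char_string_def by simp
  ultimately show "s * t \<in> char_string (char_pullback \<psi> (theta s))"
    using character_mono[OF c Int_ES[OF Domain_theta_ES[OF cancellative] nz_ideal_ES[OF cancellative]]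
        HS_Image_converse_ES[OF cancellative HS.gen nz_ideal_ES[OF cancellative]]]
    unfolding char_string_def char_pullback_def by blast
qed

lemma converse_theta_char_string:
  assumes c: "character \<psi>" and t: "t \<in> char_string \<psi>" and w: "t = (s::'a) * w"
  shows "(t, w) \<in> (theta s)\<inverse> \<and> w \<in> char_string (char_pullback \<psi> ((theta s)\<inverse>))"
proof
  have nz: "t \<noteq> 0" "w \<noteq> 0" using char_string_nonzero[OF c] t w by auto
  then show "(t, w) \<in> (theta s)\<inverse>" using w unfolding theta_def by blast
  have "nz_ideal t \<subseteq> theta s `` nz_ideal w"
    using w by (force simp: nz_ideal_iff theta_def mult.assoc)
  then have "\<psi> (theta s `` nz_ideal w) = 1"
    using character_mono[OF c nz_ideal_ES[OF cancellative] _ _] t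
      HS_Image_converse_ES[OF cancellative HS.inv[OF HS.gen] nz_ideal_ES[OF cancellative], of s w]
    unfolding char_string_def by simp
  then show "w \<in> char_string (char_pullback \<psi> ((theta s)\<inverse>))"
    unfolding char_string_def char_pullback_def by simp
qed

end

definition transports_char_strings :: "('a::{semigroup_mult,mult_zero} \<times> 'a) set \<Rightarrow> bool" where
  "transports_char_strings f \<longleftrightarrow>
     (\<forall>\<psi>. character \<psi> \<and> char_string \<psi> \<noteq> {} \<and> open_string (char_string \<psi>) \<and> \<psi> (Domain f) = 1 \<longrightarrow>
        germ_onto f (char_string \<psi>) (char_string (char_pullback \<psi> f)))"

context
  assumes cancellative: "zero_left_cancellative TYPE('a::{semigroup_mult,mult_zero})"
    and lcm: "admits_lcm TYPE('a)"
begin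

lemma char_string_is_string:
  assumes c: "character \<psi>" and ne: "char_string \<psi> \<noteq> {}"
  shows "is_string (char_string (\<psi>::'a set \<Rightarrow> nat))"
proof -
  have "s \<in> char_string \<psi>" if "t \<in> char_string \<psi>" "sdvd s t" for s t
    using that character_mono[OF c nz_ideal_ES[OF cancellative] nz_ideal_ES[OF cancellative] nz_ideal_antimono]
    unfolding char_string_def by blast
  moreover have "\<exists>r\<in>char_string \<psi>. sdvd s r \<and> sdvd t r"
    if "s \<in> char_string \<psi>" "t \<in> char_string \<psi>" for s t
  proof -
    obtain r where r: "is_lcm r s t" using lcm unfolding admits_lcm_def by blast
    have "\<psi> (nz_ideal r) = 1"
      using character_Int_eq_1[OF c nz_ideal_ES[OF cancellative] nz_ideal_ES[OF cancellative]] that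
      unfolding char_string_def is_lcm_nz_ideal[OF r, symmetric] by simp
    then show ?thesis using r unfolding char_string_def is_lcm_def by blast
  qed
  ultimately show ?thesis
    unfolding is_string_def using ne char_string_nonzero[OF c] by blast
qed

text \<open>Cancellation turns the lcm \<open>s\<alpha>\<close> of \<open>s\<close> and \<open>y\<close> into the inclusion
  \<open>\<theta>\<^sub>s\<inverse>(E\<^sub>y) \<subseteq> E\<^sub>\<alpha>\<close>.\<close>

lemma char_pullback_theta_cofinal:
  assumes c: "character \<psi>" and t0: "t0 \<in> char_string \<psi>"
    and y: "y \<in> char_string (char_pullback \<psi> (theta (s::'a)))"
  shows "\<exists>t\<in>char_string \<psi>. sdvd y (s * t)"
proof -
  obtain r where r: "is_lcm r s y" using lcm unfolding admits_lcm_def by blast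
  then have "sdvd s r" "sdvd y r" unfolding is_lcm_def by auto
  from \<open>sdvd s r\<close> show ?thesis
  proof (cases rule: sdvdE)
    case 1
    then show ?thesis using t0 \<open>sdvd y r\<close> sdvd_mult_right by blast
  next
    case (2 \<alpha>)
    have "(theta s)\<inverse> `` nz_ideal y \<subseteq> nz_ideal \<alpha>"
    proof
      fix x assume "x \<in> (theta s)\<inverse> `` nz_ideal y"
      then have x: "x \<noteq> 0" "s * x \<noteq> 0" "s * x \<in> nz_ideal y" by (auto simp: theta_def)
      then have "s * x \<in> nz_ideal s \<inter> nz_ideal y" by (auto simp: nz_ideal_iff)
      then have "s * x \<in> nz_ideal r" using is_lcm_nz_ideal[OF r] by simp
      then obtain q where "s * x = s * (\<alpha> * q)" using 2 by (auto simp: nz_ideal_iff mult.assoc)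
      then show "x \<in> nz_ideal \<alpha>" using mult_left_cancel[OF cancellative] x by (auto simp: nz_ideal_iff)
    qed
    then have "\<alpha> \<in> char_string \<psi>"
      using character_mono[OF c HS_Image_converse_ES[OF cancellative HS.gen nz_ideal_ES[OF cancellative]]
          nz_ideal_ES[OF cancellative]] y
      unfolding char_string_def char_pullback_def by blast
    then show ?thesis using \<open>sdvd y r\<close> 2 by blast
  qed
qed

lemma transports_char_strings_theta: "transports_char_strings (theta (s::'a))"
  unfolding transports_char_strings_def
proof (intro allI impI, elim conjE)
  fix \<psi> :: "'a set \<Rightarrow> nat"
  assume c: "character \<psi>" and ne: "char_string \<psi> \<noteq> {}" and d: "\<psi> (Domain (theta s)) = 1"
  let ?\<tau> = "char_string (char_pullback \<psi> (theta s))"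
  obtain t0 where t0: "t0 \<in> char_string \<psi>" using ne by blast
  have "eventually_on (char_string \<psi>) (\<lambda>t. \<exists>y. (t, y) \<in> theta s \<and> y \<in> ?\<tau>)"
    unfolding eventually_on_def using t0 theta_char_string[OF cancellative c d] by blast
  moreover have "\<exists>t\<in>char_string \<psi>. \<exists>x. (t, x) \<in> theta s \<and> sdvd y x" if "y \<in> ?\<tau>" for y
    using char_pullback_theta_cofinal[OF c t0 that] theta_char_string[OF cancellative c d] by blast
  ultimately show "germ_onto (theta s) (char_string \<psi>) ?\<tau>" unfolding germ_onto_def by blast
qed

lemma transports_char_strings_converse_theta: "transports_char_strings ((theta (s::'a))\<inverse>)"
  unfolding transports_char_strings_def Domain_converse_theta
proof (intro allI impI, elim conjE)
  fix \<psi> :: "'a set \<Rightarrow> nat"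
  assume c: "character \<psi>" and ne: "char_string \<psi> \<noteq> {}" and op: "open_string (char_string \<psi>)"
    and d: "\<psi> (nz_ideal s) = 1"
  let ?\<sigma> = "char_string \<psi>" and ?\<tau> = "char_string (char_pullback \<psi> ((theta s)\<inverse>))"
  obtain p where p: "s * p \<in> ?\<sigma>" using open_stringD[OF op] d unfolding char_string_def by blast
  have "eventually_on ?\<sigma> (\<lambda>t. \<exists>y. (t, y) \<in> (theta s)\<inverse> \<and> y \<in> ?\<tau>)"
    unfolding eventually_on_def
  proof (intro bexI[OF _ p] ballI impI)
    fix t assume "t \<in> ?\<sigma>" "sdvd (s * p) t"
    moreover obtain w where "t = s * w" using \<open>sdvd (s * p) t\<close> by (metis sdvdE mult.assoc)
    ultimately show "\<exists>y. (t, y) \<in> (theta s)\<inverse> \<and> y \<in> ?\<tau>"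
      using converse_theta_char_string[OF cancellative c] by blast
  qed
  moreover have "\<exists>t\<in>?\<sigma>. \<exists>x. (t, x) \<in> (theta s)\<inverse> \<and> sdvd y x" if y: "y \<in> ?\<tau>" for y
  proof -
    have "theta s `` nz_ideal y \<subseteq> nz_ideal (s * y)"
      by (auto simp: theta_def nz_ideal_iff mult.assoc)
    then have "s * y \<in> ?\<sigma>"
      using character_mono[OF c HS_Image_converse_ES[OF cancellative HS.inv[OF HS.gen] nz_ideal_ES[OF cancellative]]
          nz_ideal_ES[OF cancellative]] y
      unfolding char_string_def char_pullback_def by simp
    then obtain q where "s * (y * q) \<in> ?\<sigma>" using open_stringD[OF op] by (metis mult.assoc)
    then show ?thesis using converse_theta_char_string[OF cancellative c] sdvd_mult by blast
  qed
  ultimately show "germ_onto ((theta s)\<inverse>) ?\<sigma> ?\<tau>" unfolding germ_onto_def by blast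
qed

lemma transports_char_strings_relcomp:
  assumes f: "f \<in> HS" and g: "g \<in> HS"
    and tf: "transports_char_strings f" and tg: "transports_char_strings g"
  shows "transports_char_strings (f O (g::('a \<times> 'a) set))"
  unfolding transports_char_strings_def
proof (intro allI impI, elim conjE)
  fix \<psi> :: "'a set \<Rightarrow> nat"
  assume c: "character \<psi>" and ne: "char_string \<psi> \<noteq> {}" and op: "open_string (char_string \<psi>)"
    and d: "\<psi> (Domain (f O g)) = 1"
  let ?\<psi>' = "char_pullback \<psi> f"
  have ef: "equivariant_pmap f" and eg: "equivariant_pmap g"
    using HS_equivariant_pmap[OF cancellative] f g by blast+
  have st: "is_string (char_string \<psi>)" using char_string_is_string[OF c ne] .
  have df: "\<psi> (Domain f) = 1"
    using character_mono[OF c HS_Domain_ES[OF cancellative HS.comp[OF f g]] HS_Domain_ES[OF cancellative f] _ d]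
    by blast
  have germ_f: "germ_onto f (char_string \<psi>) (char_string ?\<psi>')"
    using tf c ne op df unfolding transports_char_strings_def by blast
  have c': "character ?\<psi>'" using character_pullback[OF cancellative f c df] .
  have ne': "char_string ?\<psi>' \<noteq> {}" using germ_onto_nonempty[OF germ_f] .
  have op': "open_string (char_string ?\<psi>')"
    using germ_onto_open_string[OF st op ef germ_f char_string_is_string[OF c' ne']] .
  have "Domain (f O g) = f\<inverse> `` Domain g" by auto
  then have "?\<psi>' (Domain g) = 1" using d by (simp add: char_pullback_def)
  then have "germ_onto g (char_string ?\<psi>') (char_string (char_pullback ?\<psi>' g))"
    using tg c' ne' op' unfolding transports_char_strings_def by blast
  then show "germ_onto (f O g) (char_string \<psi>) (char_string (char_pullback \<psi> (f O g)))"
    using germ_onto_relcomp[OF st ef eg germ_f] by (simp add: char_pullback_relcomp)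
qed

lemma HS_transports_char_strings:
  "f \<in> HS \<Longrightarrow> transports_char_strings (f::('a \<times> 'a) set) \<and> transports_char_strings (f\<inverse>)"
proof (induction rule: HS.induct)
  case (gen s)
  then show ?case using transports_char_strings_theta transports_char_strings_converse_theta by blast
next
  case (comp f g)
  then show ?case
    using transports_char_strings_relcomp[of f g] transports_char_strings_relcomp[of "g\<inverse>" "f\<inverse>"]
    by (simp add: converse_relcomp HS.inv)
next
  case (inv f)
  then show ?case by simp
qed

lemma character_eq_1_imp_eventually:
  assumes c: "character \<psi>" and ne: "char_string \<psi> \<noteq> {}" and op: "open_string (char_string \<psi>)"
    and X: "X \<in> ES" and \<psi>X: "\<psi> X = 1"
  shows "eventually_on (char_string \<psi>) (\<lambda>t. t \<in> (X::'a set))"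
proof -
  have "germ_onto (Id_on X) (char_string \<psi>) (char_string (char_pullback \<psi> (Id_on X)))"
    using HS_transports_char_strings[OF Id_on_HS[OF X]] c ne op \<psi>X
    unfolding transports_char_strings_def by simp
  then show ?thesis unfolding germ_onto_def by (auto elim: eventually_on_mono)
qed

theorem ultracharacter_phi:
  assumes op: "open_string \<sigma>" and mx: "maximal_string (\<sigma>::'a set)"
  shows "ultracharacter (phi \<sigma>)"
proof -
  have st: "is_string \<sigma>" using mx unfolding maximal_string_def by blast
  have "phi \<sigma> X = \<psi> X"
    if c: "character \<psi>" and le: "\<forall>X\<in>ES. phi \<sigma> X \<le> \<psi> X" and X: "X \<in> ES" for \<psi> X
  proof -
    have "\<sigma> \<subseteq> char_string \<psi>"
    proof
      fix s assume "s \<in> \<sigma>"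
      then have "1 \<le> \<psi> (nz_ideal s)" using le nz_ideal_ES[OF cancellative] phi_nz_ideal[OF st op] by metis
      then show "s \<in> char_string \<psi>"
        using character_01[OF c nz_ideal_ES[OF cancellative, of s]] unfolding char_string_def by auto
    qed
    moreover have "char_string \<psi> \<noteq> {}" using calculation string_nonempty[OF st] by blast
    ultimately have eq: "char_string \<psi> = \<sigma>"
      using mx char_string_is_string[OF c] unfolding maximal_string_def by blast
    show ?thesis
    proof (cases "\<psi> X = 1")
      case True
      then have "eventually_on \<sigma> (\<lambda>t. t \<in> X)"
        using character_eq_1_imp_eventually[OF c _ _ X] eq op string_nonempty[OF st] by auto
      then show ?thesis using phi_eq_1_if_eventually[OF st] True by simp
    next
      case False
      then show ?thesis using character_01[OF c X] le X by fastforce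
    qed
  qed
  then show ?thesis unfolding ultracharacter_def using phi_character[OF cancellative st op] by blast
qed

end

theorem theorem16p18:
  fixes \<sigma> :: "'a::{semigroup_mult,mult_zero} set"
  assumes "zero_left_cancellative TYPE('a)"
    and "admits_lcm TYPE('a)"
    and "open_string \<sigma>"
    and "maximal_string \<sigma>"
  shows "ultracharacter (phi \<sigma>)"
  using ultracharacter_phi[OF assms] .

end
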